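(* Let $F_t$, $t\in[0,1]$, be a one-parameter family on a complete metric space $(\mathbb X,d)$ satisfying (H1), (H2) and (H3). Then the lower transition attractor $A_\bullet$ exists, and: (i) $A_\bullet=\bigcap\{A\subseteq\mathbb X: F_1(A)=A \text{ and } Q\subseteq A\}$; (ii) $A_\bullet=\overline{\bigcup_{n\ge 0}F_1^{(n)}(Q)}$; (iii) $A_\bullet=\overline{\bigcup_{n\ge0}F_1^{(n)}(Q')}$, where $Q'=\{q_i:i\in J\}$ for any nonempty $J\subseteq\{1,\dots,N\}$ with $\{i:\mathrm{Lip}(f_{(i,1)},d)=1\}\subseteq J$; (iv) for any such $Q'$, $A_\bullet$ is the semiattractor of the IFS $F_1^\flat:=F_1\cup\{\check q: q\in Q'\}$, where $\check q:\mathbb X\to\mathbb X$ is the constant map $\check q(x)=q$.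
   Context: Let $(\mathbb X,d)$ be a complete metric space. A one-parameter family is $F_t=\{f_{(1,t)},\dots,f_{(N,t)}\}$, $t\in[0,1]$, $N\ge2$, of continuous self-maps of $\mathbb X$. $\mathrm{Lip}(f,d)=\sup_{x\ne y}d(f(x),f(y))/d(x,y)$ and $\mathrm{Lip}(F_t,d)=\max_i\mathrm{Lip}(f_{(i,t)},d)$. Conditions: (H1) for every $x\in\mathbb X$ and every $i$, the map $t\mapsto f_{(i,t)}(x)$ is continuous on $[0,1]$; (H2) $\mathrm{Lip}(F_t,d)<1$ for all $t\in[0,1)$; (H3) for each $i$ the limit $q_i=\lim_{t\to1^-}q_{i,t}$ exists, where $q_{i,t}$ is the unique fixed point of $f_{(i,t)}$ for $t\in[0,1)$; $Q=\{q_1,\dots,q_N\}$. For an IFS $F$ (a family of continuous self-maps) and $S\subseteq\mathbb X$, the Hutchinson operator is $F(S)=\overline{\bigcup_{f\in F}f(S)}$, $F^{(n)}$ its $n$-fold iterate, $F^{(0)}=\mathrm{id}$. The lower transition attractor of $F_t$ is the smallest (w.r.t. inclusion) set $A_\bullet\subseteq\mathbb X$ with $F_1(A_\bullet)=A_\bullet$ and $Q\subseteq A_\bullet$. For sets $S_n\subseteq\mathbb X$, $Li(S_n)=\{y\in\mathbb X:\exists x_n\in S_n,\ x_n\to y\}$ (lower Kuratowski limit). The semiattractor of an IFS $F$ on $\mathbb X$ is $A_*=\bigcap_{x\in\mathbb X}Li(F^{(n)}(\{x\}))$, provided this intersection is nonempty. *)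

theory Defs
  imports "HOL-Analysis.Analysis"
begin

definition Lip :: "('a::metric_space \<Rightarrow> 'a) \<Rightarrow> ereal" where
  "Lip f = (SUP p \<in> {(x, y). x \<noteq> y}. ereal (dist (f (fst p)) (f (snd p)) / dist (fst p) (snd p)))"

definition hutch :: "('a::topological_space \<Rightarrow> 'a) set \<Rightarrow> 'a set \<Rightarrow> 'a set" where
  "hutch F S = closure (\<Union>g\<in>F. g ` S)"

definition Li :: "(nat \<Rightarrow> 'a::topological_space set) \<Rightarrow> 'a set" where
  "Li S = {y. \<exists>xs. (\<forall>n. xs n \<in> S n) \<and> xs \<longlonglongrightarrow> y}"

definition is_semiattractor :: "('a::topological_space \<Rightarrow> 'a) set \<Rightarrow> 'a set \<Rightarrow> bool" where
  "is_semiattractor F A \<longleftrightarrow>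
     A = (\<Inter>x. Li (\<lambda>n. (hutch F ^^ n) {x})) \<and> A \<noteq> {}"

text \<open>A is the lower transition attractor of the family with endpoint IFS F1 and fixed-point
limit set Q: the smallest set (w.r.t. inclusion) with F1(A) = A and Q contained in A.\<close>
definition is_lower_transition_attractor ::
    "('a::topological_space \<Rightarrow> 'a) set \<Rightarrow> 'a set \<Rightarrow> 'a set \<Rightarrow> bool" where
  "is_lower_transition_attractor F1 Q A \<longleftrightarrow>
     hutch F1 A = A \<and> Q \<subseteq> A \<and> (\<forall>B. hutch F1 B = B \<and> Q \<subseteq> B \<longrightarrow> A \<subseteq> B)"

end

theory Submission
  imports Defs
begin

text \<open>
  For t < 1 the maps f(i,t) are contractions, so in the limit t \<rightarrow> 1 the maps f(i,1) are
  non-expansive and fix the limits q_i of the fixed points q_(i,t). Since Q \<subseteq> F_1(Q), the closed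
  orbit A = cl \<Union>_n F_1^n(Q) is F_1-invariant, and it lies in every closed invariant set containing
  Q; hence it is the lower transition attractor. Starting from a subset Q' of Q gives the same set:
  the orbit of Q' is closed and invariant under every strict contraction f(i,1), so it contains
  its fixed point q_i. Finally, adding the constant maps with values in Q' makes the n-th
  Hutchinson image of any point contain F_1^(n-1)(Q'); these sets increase to a dense subset of A,
  so every point of A is a lower limit of the iterates, and conversely no iterate of a point of Q'
  leaves A.
\<close>

lemma Lip_leD:
  assumes "Lip g \<le> ereal k"
  shows "dist (g x) (g y) \<le> k * dist x y"
proof (cases "x = y")
  case False
  have "ereal (dist (g x) (g y) / dist x y) \<le> Lip g"
    unfolding Lip_def by (rule SUP_upper2[of "(x, y)"]) (use False in auto)
  also have "\<dots> \<le> ereal k" by (rule assms)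
  finally have "dist (g x) (g y) / dist x y \<le> k" by simp
  with False show ?thesis by (simp add: pos_divide_le_eq)
qed simp

lemma Lip_leI:
  assumes "\<And>x y. dist (g x) (g y) \<le> k * dist x y"
  shows "Lip g \<le> ereal k"
  unfolding Lip_def
proof (rule SUP_least)
  fix p :: "'a \<times> 'a"
  assume "p \<in> {(x, y). x \<noteq> y}"
  then have "dist (fst p) (snd p) > 0" by auto
  with assms[of "fst p" "snd p"]
  show "ereal (dist (g (fst p)) (g (snd p)) / dist (fst p) (snd p)) \<le> ereal k"
    by (simp add: pos_divide_le_eq)
qed

lemma Lip_le_1_iff: "Lip g \<le> 1 \<longleftrightarrow> (\<forall>x y. dist (g x) (g y) \<le> dist x y)"
  using Lip_leD[of g 1] Lip_leI[of g 1] by (auto simp: one_ereal_def)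

lemma Lip_less_1_contraction:
  assumes "Lip g < 1"
  obtains k where "0 \<le> k" "k < 1" "\<And>x y. dist (g x) (g y) \<le> k * dist x y"
proof (cases "Lip g")
  case (real r)
  with assms have "Lip g \<le> ereal (max 0 r)" "max 0 r < 1" by auto
  then show ?thesis by (intro that[of "max 0 r"]) (auto intro: Lip_leD)
next
  case MInf
  then show ?thesis by (intro that[of 0]) (use Lip_leD[of g 0] in auto)
qed (use assms in simp)

lemma Lip_less_1_THE_fixed_point:
  fixes g :: "'a::complete_space \<Rightarrow> 'a"
  assumes "Lip g < 1"
  shows "g (THE x. g x = x) = (THE x. g x = x)"
proof -
  obtain k where "0 \<le> k" "k < 1" "\<And>x y. dist (g x) (g y) \<le> k * dist x y"
    using Lip_less_1_contraction[OF assms] by blast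
  then have "\<exists>!x. g x = x" by (intro banach_fix_type) auto
  then show ?thesis by (rule theI')
qed

lemma Lip_less_1_fixed_point_in_invariant:
  assumes "Lip g < 1" "g q = q" "closed C" "g ` C \<subseteq> C" "C \<noteq> {}"
  shows "q \<in> C"
proof -
  obtain k where k: "0 \<le> k" "k < 1" "\<And>x y. dist (g x) (g y) \<le> k * dist x y"
    using Lip_less_1_contraction[OF assms(1)] by blast
  obtain x where x: "x \<in> C" using assms(5) by blast
  have in_C: "(g ^^ n) x \<in> C" for n
    by (induction n) (use x assms(4) in auto)
  have bound: "dist ((g ^^ n) x) q \<le> k ^ n * dist x q" for n
  proof (induction n)
    case (Suc n)
    have "dist ((g ^^ Suc n) x) q = dist (g ((g ^^ n) x)) (g q)" using assms(2) by simp
    also have "\<dots> \<le> k * dist ((g ^^ n) x) q" by (rule k(3))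
    also have "\<dots> \<le> k * (k ^ n * dist x q)" using Suc k(1) by (rule mult_left_mono)
    finally show ?case by simp
  qed simp
  have "(\<lambda>n. k ^ n * dist x q) \<longlonglongrightarrow> 0"
    by (intro tendsto_mult_left_zero LIMSEQ_power_zero) (use k in auto)
  then have "(\<lambda>n. dist ((g ^^ n) x) q) \<longlonglongrightarrow> 0"
    by (rule Lim_null_comparison[rotated]) (simp add: bound)
  then have "(\<lambda>n. (g ^^ n) x) \<longlonglongrightarrow> q" by (rule tendsto_dist_iff[THEN iffD2])
  with assms(3) in_C show ?thesis by (rule closed_sequentially)
qed

lemma Lip_le_1_tendsto:
  fixes g :: "'b \<Rightarrow> 'a::metric_space \<Rightarrow> 'a"
  assumes "F \<noteq> bot" "eventually (\<lambda>t. Lip (g t) \<le> 1) F" "\<And>x. ((\<lambda>t. g t x) \<longlongrightarrow> h x) F"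
  shows "Lip h \<le> 1"
  unfolding Lip_le_1_iff
proof (intro allI)
  fix x y
  have "((\<lambda>t. dist (g t x) (g t y)) \<longlongrightarrow> dist (h x) (h y)) F"
    by (intro tendsto_dist assms(3))
  moreover have "eventually (\<lambda>t. dist (g t x) (g t y) \<le> dist x y) F"
    using assms(2) by eventually_elim (simp add: Lip_le_1_iff)
  ultimately show "dist (h x) (h y) \<le> dist x y"
    using assms(1) by (intro tendsto_upperbound) auto
qed

lemma fixed_point_tendsto:
  fixes g :: "'b \<Rightarrow> 'a::metric_space \<Rightarrow> 'a"
  assumes "F \<noteq> bot" "eventually (\<lambda>t. Lip (g t) \<le> 1 \<and> g t (p t) = p t) F"
    and "(p \<longlongrightarrow> q) F" "((\<lambda>t. g t q) \<longlongrightarrow> h q) F"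
  shows "h q = q"
proof -
  have "((\<lambda>t. dist (g t q) q) \<longlongrightarrow> 0) F"
  proof (rule tendsto_sandwich[of "\<lambda>_. 0" _ _ "\<lambda>t. 2 * dist (p t) q"])
    show "eventually (\<lambda>t. dist (g t q) q \<le> 2 * dist (p t) q) F"
      using assms(2)
    proof eventually_elim
      case (elim t)
      then have "dist (g t q) (g t (p t)) \<le> dist q (p t)" unfolding Lip_le_1_iff by blast
      then show ?case using dist_triangle[of "g t q" q "g t (p t)"] elim by (simp add: dist_commute)
    qed
    have "((\<lambda>t. 2 * dist (p t) q) \<longlongrightarrow> 2 * dist q q) F" by (intro tendsto_intros assms(3))
    then show "((\<lambda>t. 2 * dist (p t) q) \<longlongrightarrow> 0) F" by simp
  qed auto
  then have "((\<lambda>t. g t q) \<longlongrightarrow> q) F" by (rule tendsto_dist_iff[THEN iffD2])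
  with assms(1,4) show ?thesis by (simp add: tendsto_unique)
qed

lemma endpoint_of_contracting_family:
  fixes g :: "real \<Rightarrow> 'a::complete_space \<Rightarrow> 'a"
  assumes contr: "\<forall>t\<in>{0..<1}. Lip (g t) < 1"
    and cont: "\<forall>x. continuous_on {0..1} (\<lambda>t. g t x)"
    and fixed_lim: "((\<lambda>t. THE x. g t x = x) \<longlongrightarrow> q) (at_left 1)"
  shows "Lip (g 1) \<le> 1" "g 1 q = q"
proof -
  have lim: "((\<lambda>t. g t x) \<longlongrightarrow> g 1 x) (at_left 1)" for x
    using continuous_on_Icc_at_leftD[OF cont[rule_format, of x]] by simp
  have "eventually (\<lambda>t. t \<in> {0..<1}) (at_left (1::real))"
    by (rule eventually_mono[OF eventually_at_left_real[of 0]]) auto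
  then have ev: "eventually (\<lambda>t. Lip (g t) \<le> 1 \<and> g t (THE x. g t x = x) = (THE x. g t x = x))
      (at_left 1)"
    by eventually_elim (simp add: contr less_imp_le Lip_less_1_THE_fixed_point)
  show "Lip (g 1) \<le> 1"
    by (rule Lip_le_1_tendsto[OF _ eventually_mono[OF ev] lim]) auto
  show "g 1 q = q"
    by (rule fixed_point_tendsto[where h = "g 1", OF _ ev fixed_lim lim]) simp
qed

lemma hutch_mono: "S \<subseteq> T \<Longrightarrow> hutch F S \<subseteq> hutch F T"
  unfolding hutch_def by (intro closure_mono UN_mono order_refl image_mono)

lemma image_subset_hutch: "g \<in> F \<Longrightarrow> g ` S \<subseteq> hutch F S"
  unfolding hutch_def by (rule order_trans[OF UN_upper closure_subset])

lemma closed_hutch [simp]: "closed (hutch F S)"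
  unfolding hutch_def by simp

lemma hutch_subset_closed:
  assumes "closed B" "\<And>g. g \<in> F \<Longrightarrow> g ` S \<subseteq> B"
  shows "hutch F S \<subseteq> B"
  unfolding hutch_def using assms by (intro closure_minimal UN_least)

lemma fixed_points_subset_hutch:
  assumes "J \<subseteq> I" "\<And>i. i \<in> J \<Longrightarrow> g i (q i) = q i"
  shows "q ` J \<subseteq> hutch (g ` I) (q ` J)"
proof
  fix y assume "y \<in> q ` J"
  then obtain j where "j \<in> J" "y = q j" by blast
  with assms(2) have "y = g j (q j)" by simp
  with \<open>j \<in> J\<close> have "y \<in> g j ` q ` J" by blast
  moreover have "g j \<in> g ` I" using \<open>j \<in> J\<close> assms(1) by blast
  ultimately show "y \<in> hutch (g ` I) (q ` J)" by (meson image_subset_hutch subsetD)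
qed

definition hutch_orbit :: "('a::topological_space \<Rightarrow> 'a) set \<Rightarrow> 'a set \<Rightarrow> 'a set" where
  "hutch_orbit F P = closure (\<Union>n. (hutch F ^^ n) P)"

lemma closed_hutch_orbit [simp]: "closed (hutch_orbit F P)"
  unfolding hutch_orbit_def by simp

lemma funpow_hutch_subset_hutch_orbit: "(hutch F ^^ n) P \<subseteq> hutch_orbit F P"
  unfolding hutch_orbit_def by (rule order_trans[OF UN_upper closure_subset]) simp

lemma subset_hutch_orbit: "P \<subseteq> hutch_orbit F P"
  using funpow_hutch_subset_hutch_orbit[of 0] by simp

lemma hutch_orbit_least:
  assumes "hutch F B = B" "P \<subseteq> B"
  shows "hutch_orbit F P \<subseteq> B"
proof -
  have "(hutch F ^^ n) P \<subseteq> B" for n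
  proof (induction n)
    case (Suc n)
    then have "hutch F ((hutch F ^^ n) P) \<subseteq> hutch F B" by (rule hutch_mono)
    with assms(1) show ?case by simp
  qed (use assms(2) in simp)
  moreover have "closed B" using closed_hutch[of F B] assms(1) by simp
  ultimately show ?thesis unfolding hutch_orbit_def by (intro closure_minimal UN_least)
qed

lemma hutch_hutch_orbit:
  fixes F :: "('a::metric_space \<Rightarrow> 'a) set"
  assumes cont: "\<And>g. g \<in> F \<Longrightarrow> continuous_on UNIV g" and P: "P \<subseteq> hutch F P"
  shows "hutch F (hutch_orbit F P) = hutch_orbit F P"
proof (rule antisym)
  show "hutch F (hutch_orbit F P) \<subseteq> hutch_orbit F P"
  proof (rule hutch_subset_closed)
    fix g assume g: "g \<in> F"
    have "g ` (hutch F ^^ n) P \<subseteq> hutch_orbit F P" for n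
      using image_subset_hutch[OF g] funpow_hutch_subset_hutch_orbit[where n = "Suc n" and F = F]
      by fastforce
    then show "g ` hutch_orbit F P \<subseteq> hutch_orbit F P"
      unfolding hutch_orbit_def
      by (intro image_closure_subset continuous_on_subset[OF cont[OF g]]) auto
  qed simp
  have "(hutch F ^^ n) P \<subseteq> hutch F (hutch_orbit F P)" for n
  proof (cases n)
    case 0
    then show ?thesis using P hutch_mono[OF subset_hutch_orbit] by fastforce
  next
    case (Suc m)
    then show ?thesis using hutch_mono[OF funpow_hutch_subset_hutch_orbit[where n = m]] by simp
  qed
  then show "hutch_orbit F P \<subseteq> hutch F (hutch_orbit F P)"
    unfolding hutch_orbit_def by (intro closure_minimal UN_least) auto
qed

lemma is_lower_transition_attractor_hutch_orbit:
  fixes F :: "('a::metric_space \<Rightarrow> 'a) set"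
  assumes "\<And>g. g \<in> F \<Longrightarrow> continuous_on UNIV g" "P \<subseteq> hutch F P"
  shows "is_lower_transition_attractor F P (hutch_orbit F P)"
  unfolding is_lower_transition_attractor_def
  by (intro conjI allI impI hutch_hutch_orbit[OF assms] subset_hutch_orbit hutch_orbit_least) auto

lemma is_lower_transition_attractor_eq_Inter:
  assumes "is_lower_transition_attractor F Q A"
  shows "A = \<Inter>{B. hutch F B = B \<and> Q \<subseteq> B}"
  using assms unfolding is_lower_transition_attractor_def by blast

lemma hutch_orbit_fixed_points_eq:
  fixes g :: "'i \<Rightarrow> 'a::metric_space \<Rightarrow> 'a"
  assumes cont: "\<And>i. i \<in> I \<Longrightarrow> continuous_on UNIV (g i)"
    and fixed: "\<And>i. i \<in> I \<Longrightarrow> g i (q i) = q i"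
    and J: "J \<noteq> {}" "J \<subseteq> I"
    and contr: "\<And>i. i \<in> I - J \<Longrightarrow> Lip (g i) < 1"
  shows "hutch_orbit (g ` I) (q ` J) = hutch_orbit (g ` I) (q ` I)"
proof (rule antisym)
  have cont': "\<And>h. h \<in> g ` I \<Longrightarrow> continuous_on UNIV h" using cont by blast
  have fixed_J: "q ` J \<subseteq> hutch (g ` I) (q ` J)"
    using J(2) fixed by (intro fixed_points_subset_hutch) auto
  have fixed_I: "q ` I \<subseteq> hutch (g ` I) (q ` I)"
    using fixed by (intro fixed_points_subset_hutch) auto
  let ?C = "hutch_orbit (g ` I) (q ` J)"
  have inv: "hutch (g ` I) ?C = ?C" by (rule hutch_hutch_orbit[OF cont' fixed_J])
  have "q i \<in> ?C" if "i \<in> I" for i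
  proof (cases "i \<in> J")
    case True
    then show ?thesis using subset_hutch_orbit[of "q ` J" "g ` I"] by blast
  next
    case False
    have "g i ` ?C \<subseteq> ?C" using image_subset_hutch[of "g i" "g ` I" ?C] inv that by simp
    moreover have "?C \<noteq> {}" using subset_hutch_orbit[of "q ` J" "g ` I"] J(1) by blast
    ultimately show ?thesis
      using that False contr fixed by (intro Lip_less_1_fixed_point_in_invariant) auto
  qed
  then show "hutch_orbit (g ` I) (q ` I) \<subseteq> ?C"
    using inv by (intro hutch_orbit_least) auto
  show "?C \<subseteq> hutch_orbit (g ` I) (q ` I)"
  proof (rule hutch_orbit_least)
    show "hutch (g ` I) (hutch_orbit (g ` I) (q ` I)) = hutch_orbit (g ` I) (q ` I)"
      by (rule hutch_hutch_orbit[OF cont' fixed_I])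
    show "q ` J \<subseteq> hutch_orbit (g ` I) (q ` I)"
      using image_mono[OF J(2), of q] subset_hutch_orbit[of "q ` I" "g ` I"] by (rule order_trans)
  qed
qed

lemma Li_subset_closed:
  assumes "closed A" "\<And>n. S n \<subseteq> A"
  shows "Li S \<subseteq> A"
proof
  fix y assume "y \<in> Li S"
  then obtain xs where "\<And>n. xs n \<in> S n" "xs \<longlonglongrightarrow> y" unfolding Li_def by blast
  with assms show "y \<in> A" by (meson closed_sequentially subsetD)
qed

lemma closure_Union_subset_Li:
  fixes S T :: "nat \<Rightarrow> 'a::metric_space set"
  assumes ne: "\<And>n. S n \<noteq> {}" and sub: "\<And>k n. k < n \<Longrightarrow> T k \<subseteq> S n"
  shows "closure (\<Union>k. T k) \<subseteq> Li S"
proof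
  fix y assume y: "y \<in> closure (\<Union>k. T k)"
  \<comment> \<open>choose almost nearest points of \<open>S n\<close>; a point of some \<open>T k\<close> near \<open>y\<close> bounds their distance\<close>
  have "\<exists>z. z \<in> S n \<and> dist y z < infdist y (S n) + inverse (real (Suc n))" for n
  proof -
    have "Inf ((\<lambda>a. dist y a) ` S n) < infdist y (S n) + inverse (real (Suc n))"
      using infdist_notempty[OF ne[of n], of y] by simp
    from cInf_lessD[OF _ this] ne[of n] show ?thesis by auto
  qed
  then obtain xs where xs: "\<And>n. xs n \<in> S n"
    "\<And>n. dist y (xs n) < infdist y (S n) + inverse (real (Suc n))"
    by metis
  have "xs \<longlonglongrightarrow> y"
  proof (rule metric_LIMSEQ_I)
    fix r :: real assume r: "r > 0"
    have "\<exists>z\<in>(\<Union>k. T k). dist z y < r / 2"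
      using y half_gt_zero[OF r] unfolding closure_approachable by blast
    then obtain z k where z: "z \<in> T k" "dist z y < r / 2" by blast
    obtain m where m: "inverse (real (Suc m)) < r / 2"
      using reals_Archimedean[of "r / 2"] r by auto
    show "\<exists>no. \<forall>n\<ge>no. dist (xs n) y < r"
    proof (intro exI allI impI)
      fix n assume n: "max (Suc k) m \<le> n"
      then have "infdist y (S n) \<le> dist y z"
        using sub[of k n] z(1) by (intro infdist_le) auto
      moreover have "inverse (real (Suc n)) \<le> inverse (real (Suc m))"
        using n by (intro le_imp_inverse_le) auto
      ultimately show "dist (xs n) y < r"
        using xs(2)[of n] z(2) m dist_commute[of "xs n" y] dist_commute[of z y] by linarith
    qed
  qed
  then show "y \<in> Li S" unfolding Li_def using xs(1) by blast
qed

lemma incseq_funpow_hutch: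
  assumes "P \<subseteq> hutch F P"
  shows "incseq (\<lambda>k. (hutch F ^^ k) P)"
proof (rule incseq_SucI)
  show "(hutch F ^^ k) P \<subseteq> (hutch F ^^ Suc k) P" for k
  proof (induction k)
    case (Suc k)
    then show ?case using hutch_mono[OF Suc.IH] by simp
  qed (use assms in simp)
qed

lemma hutch_orbit_subset_Li:
  fixes F H :: "('a::metric_space \<Rightarrow> 'a) set"
  assumes FH: "F \<subseteq> H" and const: "\<And>p. p \<in> P \<Longrightarrow> (\<lambda>_. p) \<in> H"
    and P: "P \<noteq> {}" "P \<subseteq> hutch F P"
  shows "hutch_orbit F P \<subseteq> Li (\<lambda>n. (hutch H ^^ n) {x})"
proof -
  define T where "T k = (hutch F ^^ k) P" for k
  have P_H: "P \<subseteq> hutch H {x}"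
  proof
    fix p assume "p \<in> P"
    then have "(\<lambda>_. p) ` {x} \<subseteq> hutch H {x}" by (intro image_subset_hutch const)
    then show "p \<in> hutch H {x}" by simp
  qed
  \<comment> \<open>the constant maps restart the orbit of \<open>P\<close> from any point, one step late\<close>
  have T_H: "T k \<subseteq> (hutch H ^^ Suc k) {x}" for k
  proof (induction k)
    case 0
    then show ?case using P_H by (simp add: T_def)
  next
    case (Suc k)
    have "T (Suc k) = hutch F (T k)" by (simp add: T_def)
    also have "\<dots> \<subseteq> hutch F ((hutch H ^^ Suc k) {x})" using Suc.IH by (rule hutch_mono)
    also have "\<dots> \<subseteq> hutch H ((hutch H ^^ Suc k) {x})"
      unfolding hutch_def using FH by (intro closure_mono) blast
    finally show ?case by simp
  qed
  have ne: "(hutch H ^^ n) {x} \<noteq> {}" for n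
  proof (cases n)
    case (Suc k)
    then show ?thesis using T_H[of k] incseq_funpow_hutch[OF P(2)] P(1)
      by (auto simp: T_def dest!: monoD[of _ 0 k])
  qed simp
  have "T k \<subseteq> (hutch H ^^ n) {x}" if kn: "k < n" for k n
  proof -
    obtain d where "n = Suc (k + d)" using less_imp_Suc_add[OF kn] by blast
    moreover have "T k \<subseteq> T (k + d)"
      using monoD[OF incseq_funpow_hutch[OF P(2)] le_add1] by (simp add: T_def)
    ultimately show ?thesis using T_H[of "k + d"] by simp
  qed
  then show ?thesis
    unfolding hutch_orbit_def T_def[symmetric] by (intro closure_Union_subset_Li ne)
qed

lemma is_semiattractor_hutch_orbit:
  fixes F :: "('a::metric_space \<Rightarrow> 'a) set"
  assumes cont: "\<And>g. g \<in> F \<Longrightarrow> continuous_on UNIV g" and P: "P \<noteq> {}" "P \<subseteq> hutch F P"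
  shows "is_semiattractor (F \<union> (\<lambda>p. \<lambda>x. p) ` P) (hutch_orbit F P)"
proof -
  define H where "H = F \<union> (\<lambda>p. \<lambda>x. p) ` P"
  let ?A = "hutch_orbit F P"
  let ?L = "\<lambda>x. Li (\<lambda>n. (hutch H ^^ n) {x})"
  obtain p where p: "p \<in> P" using P(1) by blast
  have H_A: "hutch H S \<subseteq> ?A" if S: "S \<subseteq> ?A" for S
  proof (rule hutch_subset_closed)
    fix h assume "h \<in> H"
    then consider "h \<in> F" | p' where "p' \<in> P" "h = (\<lambda>_. p')" unfolding H_def by blast
    then show "h ` S \<subseteq> ?A"
    proof cases
      case 1
      have "h ` S \<subseteq> hutch F ?A"
        using image_subset_hutch[OF 1, of S] hutch_mono[OF S, of F] by (rule order_trans)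
      then show ?thesis using hutch_hutch_orbit[OF cont P(2)] by simp
    next
      case 2
      then show ?thesis using subset_hutch_orbit[of P F] by auto
    qed
  qed simp
  have "(hutch H ^^ n) {p} \<subseteq> ?A" for n
  proof (induction n)
    case 0
    then show ?case using p subset_hutch_orbit[of P F] by auto
  qed (simp add: H_A)
  then have "?L p \<subseteq> ?A" by (intro Li_subset_closed closed_hutch_orbit)
  then have "(\<Inter>x. ?L x) \<subseteq> ?A" by (meson INT_lower UNIV_I order_trans)
  moreover have "?A \<subseteq> (\<Inter>x. ?L x)"
    using P unfolding H_def by (intro INT_greatest hutch_orbit_subset_Li) auto
  moreover have "?A \<noteq> {}" using p subset_hutch_orbit[of P F] by blast
  ultimately show ?thesis unfolding is_semiattractor_def H_def[symmetric] by blast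
qed

theorem mainTheorem3:
  fixes f :: "nat \<Rightarrow> real \<Rightarrow> 'a::complete_space \<Rightarrow> 'a"
    and N :: nat and q :: "nat \<Rightarrow> 'a"
  assumes N2: "N \<ge> 2"
    and cont: "\<forall>i\<in>{1..N}. \<forall>t\<in>{0..1}. continuous_on UNIV (f i t)"
    and H1: "\<forall>i\<in>{1..N}. \<forall>x. continuous_on {0..1} (\<lambda>t. f i t x)"
    and H2: "\<forall>t\<in>{0..<1}. \<forall>i\<in>{1..N}. Lip (f i t) < 1"
    and H3: "\<forall>i\<in>{1..N}. ((\<lambda>t. THE x. f i t x = x) \<longlongrightarrow> q i) (at_left 1)"
  shows "\<exists>A. is_lower_transition_attractor ((\<lambda>i. f i 1) ` {1..N}) (q ` {1..N}) A
    \<and> A = \<Inter>{B. hutch ((\<lambda>i. f i 1) ` {1..N}) B = B \<and> q ` {1..N} \<subseteq> B}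
    \<and> A = closure (\<Union>n. (hutch ((\<lambda>i. f i 1) ` {1..N}) ^^ n) (q ` {1..N}))
    \<and> (\<forall>J. J \<noteq> {} \<and> J \<subseteq> {1..N} \<and> {i\<in>{1..N}. Lip (f i 1) = 1} \<subseteq> J \<longrightarrow>
          A = closure (\<Union>n. (hutch ((\<lambda>i. f i 1) ` {1..N}) ^^ n) (q ` J))
        \<and> is_semiattractor ((\<lambda>i. f i 1) ` {1..N} \<union> (\<lambda>p. \<lambda>x. p) ` (q ` J)) A)"
proof -
  let ?F = "(\<lambda>i. f i 1) ` {1..N}"
  have cont1: "\<And>i. i \<in> {1..N} \<Longrightarrow> continuous_on UNIV (f i 1)" using cont by simp
  have Lip1: "Lip (f i 1) \<le> 1" and fixed1: "f i 1 (q i) = q i" if "i \<in> {1..N}" for i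
    using endpoint_of_contracting_family[of "f i" "q i"] H1 H2 H3 that by auto
  define A where "A = hutch_orbit ?F (q ` {1..N})"
  have lta: "is_lower_transition_attractor ?F (q ` {1..N}) A"
    unfolding A_def using cont1 fixed1
    by (intro is_lower_transition_attractor_hutch_orbit fixed_points_subset_hutch) auto
  have subfamily: "hutch_orbit ?F (q ` J) = A \<and> is_semiattractor (?F \<union> (\<lambda>p. \<lambda>x. p) ` (q ` J)) A"
    if J: "J \<noteq> {}" "J \<subseteq> {1..N}" "{i\<in>{1..N}. Lip (f i 1) = 1} \<subseteq> J" for J
  proof -
    have "hutch_orbit ?F (q ` J) = A"
      unfolding A_def using J Lip1
      by (intro hutch_orbit_fixed_points_eq cont1 fixed1) (auto simp: order.strict_iff_order)
    moreover have "is_semiattractor (?F \<union> (\<lambda>p. \<lambda>x. p) ` (q ` J)) (hutch_orbit ?F (q ` J))"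
      using J cont1 fixed1 by (intro is_semiattractor_hutch_orbit fixed_points_subset_hutch) auto
    ultimately show ?thesis by simp
  qed
  show ?thesis
  proof (intro exI[of _ A] conjI allI impI)
    show "is_lower_transition_attractor ?F (q ` {1..N}) A" by (fact lta)
    show "A = \<Inter>{B. hutch ?F B = B \<and> q ` {1..N} \<subseteq> B}"
      by (rule is_lower_transition_attractor_eq_Inter[OF lta])
    show "A = closure (\<Union>n. (hutch ?F ^^ n) (q ` {1..N}))" by (simp add: A_def hutch_orbit_def)
  next
    fix J assume "J \<noteq> {} \<and> J \<subseteq> {1..N} \<and> {i\<in>{1..N}. Lip (f i 1) = 1} \<subseteq> J"
    then show "A = closure (\<Union>n. (hutch ?F ^^ n) (q ` J))"
      and "is_semiattractor (?F \<union> (\<lambda>p. \<lambda>x. p) ` (q ` J)) A"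
      using subfamily[of J] by (auto simp: hutch_orbit_def)
  qed
qed

end
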